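(* Let $\rho\in(0,1)$ and let $\Lambda\ge2$ be an integer. The following are equivalent: (a) there exist real numbers $r_1,\dots,r_{\Lambda-1}$ with $r_{s+1}=\dfrac{[1+(\rho^{-1}+1)r_1]r_s+r_1}{1-\rho^{-1}r_1r_s}$ for $1\le s\le\Lambda-2$ and $\rho^2\le r_1\le\cdots\le r_{\Lambda-1}\le\rho$; (b) the numbers $r_k=\rho\dfrac{X^k-1}{1-\rho X^k}$ with $X=\dfrac{1+\rho}{1+\rho^2}$ satisfy $\rho^2\le r_k\le\rho$ for $1\le k\le\Lambda-1$; (c) the numbers $r_k=\rho\dfrac{X^k-1}{1-\rho X^k}$ with $X=\big(\tfrac{2}{1+\rho}\big)^{1/(\Lambda-1)}$ satisfy $\rho^2\le r_k\le\rho$ for $1\le k\le\Lambda-1$; (d) $(1+\rho)^\Lambda\le2(1+\rho^2)^{\Lambda-1}$; (e) $\rho\le\rho^\star_\Lambda$, where for $\Lambda\ge3$, $\rho^\star_\Lambda$ is the unique solution in $(0,1)$ of $(1+\rho)^\Lambda=2(1+\rho^2)^{\Lambda-1}$ (in particular this solution exists and is unique), and $\rho^\star_2=1$. *)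

theory Defs
  imports Complex_Main
begin

definition rho_star :: "nat \<Rightarrow> real" where
  "rho_star \<Lambda> = (if \<Lambda> = 2 then 1 else
     (THE x. 0 < x \<and> x < 1 \<and> (1 + x) ^ \<Lambda> = 2 * (1 + x\<^sup>2) ^ (\<Lambda> - 1)))"

end

theory Submission
  imports Defs
begin

text \<open>The Moebius map \<open>mobius \<rho> t = \<rho>(t - 1)/(1 - \<rho>t)\<close> conjugates multiplication to the
  recursion step: \<open>rate_step \<rho> (mobius \<rho> s) (mobius \<rho> t) = mobius \<rho> (s t)\<close>, and its inverse
  turns the recursion back into multiplication. So the solutions of the recursion are exactly
  \<open>r\<^sub>k = mobius \<rho> (T\<^sup>k)\<close>, and the band \<open>\<rho>\<^sup>2 \<le> r \<le> \<rho>\<close> corresponds to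
  \<open>(1 + \<rho>)/(1 + \<rho>\<^sup>2) \<le> T \<le> 2/(1 + \<rho>)\<close>. With \<open>N = \<Lambda> - 1\<close>, conditions (a)--(d) all say
  \<open>((1 + \<rho>)/(1 + \<rho>\<^sup>2))\<^sup>N \<le> 2/(1 + \<rho>)\<close>. For (e), \<open>\<Lambda> ln(1 + x) - (\<Lambda> - 1) ln(1 + x\<^sup>2)\<close> is
  0 at 0 and \<open>ln 2\<close> at 1 and first increases, then decreases on \<open>[0, \<infinity>)\<close>, so it crosses
  \<open>ln 2\<close> exactly once in (0,1), from below.\<close>

definition mobius :: "real \<Rightarrow> real \<Rightarrow> real" where
  "mobius \<rho> t = \<rho> * (t - 1) / (1 - \<rho> * t)"

definition mobius_inv :: "real \<Rightarrow> real \<Rightarrow> real" where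
  "mobius_inv \<rho> r = (r + \<rho>) / (\<rho> * (1 + r))"

definition rate_step :: "real \<Rightarrow> real \<Rightarrow> real \<Rightarrow> real" where
  "rate_step \<rho> a b = ((1 + (inverse \<rho> + 1) * a) * b + a) / (1 - inverse \<rho> * a * b)"

lemma band_lower_gt_one:
  fixes \<rho> :: real
  assumes "0 < \<rho>" "\<rho> < 1"
  shows "1 < (1 + \<rho>) / (1 + \<rho>\<^sup>2)"
  using assms by (simp add: add_pos_nonneg power2_eq_square mult_strict_left_mono)

lemma band_upper_lt_inverse:
  fixes \<rho> :: real
  assumes "0 < \<rho>" "\<rho> < 1"
  shows "\<rho> * (2 / (1 + \<rho>)) < 1"
  using assms by (simp add: field_simps)

lemma mobius_band_iff:
  assumes "0 < \<rho>" "\<rho> < 1"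
  shows "\<rho>\<^sup>2 \<le> mobius \<rho> t \<and> mobius \<rho> t \<le> \<rho> \<longleftrightarrow> (1 + \<rho>) / (1 + \<rho>\<^sup>2) \<le> t \<and> t \<le> 2 / (1 + \<rho>)"
proof -
  have sq: "0 < 1 + \<rho>\<^sup>2" by (simp add: add_pos_nonneg)
  have lower: "\<rho>\<^sup>2 \<le> mobius \<rho> t \<longleftrightarrow> (1 + \<rho>) / (1 + \<rho>\<^sup>2) \<le> t" if "\<rho> * t < 1"
  proof -
    have "\<rho>\<^sup>2 \<le> mobius \<rho> t \<longleftrightarrow> \<rho> * (\<rho> * (1 - \<rho> * t)) \<le> \<rho> * (t - 1)"
      using that by (simp add: mobius_def pos_le_divide_eq power2_eq_square mult.assoc)
    also have "\<dots> \<longleftrightarrow> \<rho> * (1 - \<rho> * t) \<le> t - 1"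
      using assms(1) by simp
    also have "\<dots> \<longleftrightarrow> 1 + \<rho> \<le> t * (1 + \<rho>\<^sup>2)"
      by (simp add: algebra_simps power2_eq_square)
    finally show ?thesis using sq by (simp add: pos_divide_le_eq)
  qed
  have upper: "mobius \<rho> t \<le> \<rho> \<longleftrightarrow> t \<le> 2 / (1 + \<rho>)" if "\<rho> * t < 1"
  proof -
    have "mobius \<rho> t \<le> \<rho> \<longleftrightarrow> \<rho> * (t - 1) \<le> \<rho> * (1 - \<rho> * t)"
      using that by (simp add: mobius_def pos_divide_le_eq)
    also have "\<dots> \<longleftrightarrow> t - 1 \<le> 1 - \<rho> * t"
      using assms(1) by simp
    also have "\<dots> \<longleftrightarrow> t * (1 + \<rho>) \<le> 2"
      by (simp add: algebra_simps)
    finally show ?thesis using assms(1) by (simp add: pos_le_divide_eq)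
  qed
  have "\<rho> * t < 1" if "\<rho>\<^sup>2 \<le> mobius \<rho> t"
  proof (rule ccontr)
    assume not_lt: "\<not> \<rho> * t < 1"
    then have "\<rho> * 1 < \<rho> * t" using assms(2) by linarith
    then have "1 < t" using assms(1) by simp
    then have "mobius \<rho> t \<le> 0"
      using not_lt assms(1) unfolding mobius_def by (intro divide_nonneg_nonpos) auto
    moreover have "0 < \<rho>\<^sup>2" using assms(1) by simp
    ultimately show False using that by linarith
  qed
  moreover have "\<rho> * t < 1" if "t \<le> 2 / (1 + \<rho>)"
  proof -
    have "\<rho> * t \<le> \<rho> * (2 / (1 + \<rho>))" using that assms(1) by (intro mult_left_mono) auto
    then show ?thesis using band_upper_lt_inverse[OF assms] by linarith
  qed
  ultimately show ?thesis using lower upper by blast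
qed

lemma mobius_powers_band_iff:
  assumes "0 < \<rho>" "\<rho> < 1" "1 \<le> N"
  shows "(\<forall>k. 1 \<le> k \<and> k \<le> N \<longrightarrow> \<rho>\<^sup>2 \<le> mobius \<rho> (X ^ k) \<and> mobius \<rho> (X ^ k) \<le> \<rho>)
     \<longleftrightarrow> (1 + \<rho>) / (1 + \<rho>\<^sup>2) \<le> X \<and> X ^ N \<le> 2 / (1 + \<rho>)"
    (is "(\<forall>k. _ \<longrightarrow> ?band k) \<longleftrightarrow> ?lo \<le> X \<and> X ^ N \<le> ?hi")
proof
  assume "\<forall>k. 1 \<le> k \<and> k \<le> N \<longrightarrow> ?band k"
  then have "?band 1" "?band N" using assms(3) by auto
  then show "?lo \<le> X \<and> X ^ N \<le> ?hi" using mobius_band_iff[OF assms(1,2)] by simp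
next
  assume X: "?lo \<le> X \<and> X ^ N \<le> ?hi"
  have "1 < ?lo" using band_lower_gt_one[OF assms(1,2)] .
  then have "X ^ 1 \<le> X ^ k \<and> X ^ k \<le> X ^ N" if "1 \<le> k" "k \<le> N" for k
    using X that by (intro conjI power_increasing) auto
  then show "\<forall>k. 1 \<le> k \<and> k \<le> N \<longrightarrow> ?band k"
    using X mobius_band_iff[OF assms(1,2)] by force
qed

lemma mobius_mono:
  assumes "0 < \<rho>" "\<rho> < 1" "s \<le> t" "\<rho> * t < 1"
  shows "mobius \<rho> s \<le> mobius \<rho> t"
proof -
  have "\<rho> * s \<le> \<rho> * t" using assms by (simp add: mult_left_mono)
  then have pos: "0 < 1 - \<rho> * s" "0 < 1 - \<rho> * t" using assms(4) by linarith+
  have "\<rho> * (t - 1) * (1 - \<rho> * s) - \<rho> * (s - 1) * (1 - \<rho> * t) = \<rho> * (1 - \<rho>) * (t - s)"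
    by (simp add: algebra_simps)
  also have "\<dots> \<ge> 0" using assms by simp
  finally show ?thesis unfolding mobius_def using pos
    by (simp add: divide_le_eq le_divide_eq mult.commute mult.left_commute)
qed

lemma mobius_mult:
  assumes "0 < \<rho>" "\<rho> \<noteq> 1" "\<rho> * s \<noteq> 1" "\<rho> * t \<noteq> 1" "\<rho> * (s * t) \<noteq> 1"
  shows "rate_step \<rho> (mobius \<rho> s) (mobius \<rho> t) = mobius \<rho> (s * t)"
proof -
  define u v where "u = mobius \<rho> s" and "v = mobius \<rho> t"
  have u: "u * (1 - \<rho> * s) = \<rho> * (s - 1)" and v: "v * (1 - \<rho> * t) = \<rho> * (t - 1)"
    using assms unfolding u_def v_def mobius_def by auto
  have den: "(1 - inverse \<rho> * u * v) * ((1 - \<rho> * s) * (1 - \<rho> * t)) = (1 - \<rho>) * (1 - \<rho> * (s * t))"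
  proof -
    have "(1 - inverse \<rho> * u * v) * ((1 - \<rho> * s) * (1 - \<rho> * t))
        = (1 - \<rho> * s) * (1 - \<rho> * t) - inverse \<rho> * (u * (1 - \<rho> * s)) * (v * (1 - \<rho> * t))"
      by (simp add: algebra_simps)
    also have "\<dots> = (1 - \<rho>) * (1 - \<rho> * (s * t))"
      unfolding u v using assms(1) by (simp add: field_simps)
    finally show ?thesis .
  qed
  have num: "((1 + (inverse \<rho> + 1) * u) * v + u) * ((1 - \<rho> * s) * (1 - \<rho> * t)) = \<rho> * (1 - \<rho>) * (s * t - 1)"
  proof -
    have "((1 + (inverse \<rho> + 1) * u) * v + u) * ((1 - \<rho> * s) * (1 - \<rho> * t))
        = (1 - \<rho> * s) * (v * (1 - \<rho> * t)) + (inverse \<rho> + 1) * (u * (1 - \<rho> * s)) * (v * (1 - \<rho> * t))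
          + (u * (1 - \<rho> * s)) * (1 - \<rho> * t)"
      by (simp add: algebra_simps)
    also have "\<dots> = \<rho> * (1 - \<rho>) * (s * t - 1)"
      unfolding u v using assms(1) by (simp add: field_simps)
    finally show ?thesis .
  qed
  have nz: "(1 - \<rho> * s) * (1 - \<rho> * t) \<noteq> 0" using assms by simp
  have "rate_step \<rho> u v = \<rho> * (1 - \<rho>) * (s * t - 1) / ((1 - \<rho>) * (1 - \<rho> * (s * t)))"
    unfolding rate_step_def num[symmetric] den[symmetric] using nz by simp
  also have "\<dots> = mobius \<rho> (s * t)" unfolding mobius_def using assms by simp
  finally show ?thesis unfolding u_def v_def .
qed

lemma mobius_inv_step:
  assumes "0 < \<rho>" "a * b \<noteq> \<rho>" "a \<noteq> -1" "b \<noteq> -1"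
  shows "mobius_inv \<rho> (rate_step \<rho> a b) = mobius_inv \<rho> a * mobius_inv \<rho> b"
proof -
  define D N where "D = 1 - inverse \<rho> * a * b" and "N = (1 + (inverse \<rho> + 1) * a) * b + a"
  have "D \<noteq> 0" using assms unfolding D_def by (auto simp: field_simps)
  have e1: "\<rho> * (N + \<rho> * D) = (a + \<rho>) * (b + \<rho>)" and e2: "D + N = (1 + a) * (1 + b)"
    unfolding N_def D_def using assms(1) by (simp_all add: field_simps)
  have "N / D + \<rho> = (N + \<rho> * D) / D" "1 + N / D = (D + N) / D"
    using \<open>D \<noteq> 0\<close> by (simp_all add: field_simps)
  then have "mobius_inv \<rho> (N / D) = (N + \<rho> * D) / (\<rho> * (D + N))"
    unfolding mobius_inv_def using \<open>D \<noteq> 0\<close> by simp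
  also have "\<dots> = (\<rho> * (N + \<rho> * D)) / (\<rho> * (\<rho> * (D + N)))"
    using assms(1) by simp
  also have "\<dots> = mobius_inv \<rho> a * mobius_inv \<rho> b"
    unfolding e1 e2 mobius_inv_def by (simp add: field_simps)
  finally show ?thesis unfolding rate_step_def N_def D_def .
qed

lemma mobius_inv_band:
  assumes "0 < \<rho>" "\<rho> < 1" "\<rho>\<^sup>2 \<le> r" "r \<le> \<rho>"
  shows "(1 + \<rho>) / (1 + \<rho>\<^sup>2) \<le> mobius_inv \<rho> r \<and> mobius_inv \<rho> r \<le> 2 / (1 + \<rho>)"
proof -
  have "0 \<le> r" using assms(3) zero_le_power2[of \<rho>] by linarith
  then have pos: "0 < 1 + \<rho>\<^sup>2" "0 < \<rho> * (1 + r)" using assms(1) by (auto intro: add_pos_nonneg)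
  have "(1 + \<rho>) * (\<rho> * (1 + r)) \<le> (r + \<rho>) * (1 + \<rho>\<^sup>2)"
  proof -
    have "(r + \<rho>) * (1 + \<rho>\<^sup>2) - (1 + \<rho>) * (\<rho> * (1 + r)) = (1 - \<rho>) * (r - \<rho>\<^sup>2)"
      by (simp add: algebra_simps power2_eq_square)
    also have "\<dots> \<ge> 0" using assms by simp
    finally show ?thesis by simp
  qed
  moreover have "(r + \<rho>) * (1 + \<rho>) \<le> 2 * (\<rho> * (1 + r))"
  proof -
    have "2 * (\<rho> * (1 + r)) - (r + \<rho>) * (1 + \<rho>) = (1 - \<rho>) * (\<rho> - r)"
      by (simp add: algebra_simps)
    also have "\<dots> \<ge> 0" using assms by simp
    finally show ?thesis by simp
  qed
  ultimately show ?thesis unfolding mobius_inv_def using pos assms(1)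
    by (simp add: divide_le_eq le_divide_eq mult.commute)
qed

lemma ratio_power_threshold_iff:
  fixes \<rho> :: real
  assumes "0 < 1 + \<rho>"
  shows "(1 + \<rho>) ^ Suc N \<le> 2 * (1 + \<rho>\<^sup>2) ^ N \<longleftrightarrow> ((1 + \<rho>) / (1 + \<rho>\<^sup>2)) ^ N \<le> 2 / (1 + \<rho>)"
proof -
  have "0 < (1 + \<rho>\<^sup>2) ^ N" by (simp add: add_pos_nonneg)
  then show ?thesis using assms
    by (simp add: power_divide divide_le_eq le_divide_eq mult.commute)
qed

definition admissible_rates :: "real \<Rightarrow> nat \<Rightarrow> (nat \<Rightarrow> real) \<Rightarrow> bool" where
  "admissible_rates \<rho> N r \<longleftrightarrow>
     (\<forall>s. 1 \<le> s \<and> s \<le> N - 1 \<longrightarrow> r (s + 1) = rate_step \<rho> (r 1) (r s))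
     \<and> \<rho>\<^sup>2 \<le> r 1 \<and> (\<forall>k. 1 \<le> k \<and> k < N \<longrightarrow> r k \<le> r (k + 1)) \<and> r N \<le> \<rho>"

lemma admissible_rates_band:
  assumes "admissible_rates \<rho> N r" "1 \<le> k" "k \<le> N"
  shows "\<rho>\<^sup>2 \<le> r k \<and> r k \<le> \<rho>"
proof -
  have step_mono: "r m \<le> r (m + 1)" if "1 \<le> m" "m < N" for m
    using assms(1) that unfolding admissible_rates_def by blast
  have mono: "r i \<le> r j" if "1 \<le> i" "i \<le> j" "j \<le> N" for i j
    using that(2,3)
  proof (induction j rule: dec_induct)
    case (step m)
    then show ?case using step_mono[of m] that(1) by simp
  qed simp
  show ?thesis using mono[of 1 k] mono[of k N] assms unfolding admissible_rates_def by force
qed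

lemma admissible_rates_imp_ratio_power:
  assumes "0 < \<rho>" "\<rho> < 1" "1 \<le> N" "admissible_rates \<rho> N r"
  shows "((1 + \<rho>) / (1 + \<rho>\<^sup>2)) ^ N \<le> 2 / (1 + \<rho>)"
proof -
  define T where "T = mobius_inv \<rho> (r 1)"
  have band: "\<rho>\<^sup>2 \<le> r k \<and> r k \<le> \<rho>" if "1 \<le> k" "k \<le> N" for k
    using admissible_rates_band[OF assms(4) that] .
  have nonneg: "0 \<le> r k" if "1 \<le> k" "k \<le> N" for k
    using band[OF that] zero_le_power2[of \<rho>] by linarith
  have powers: "mobius_inv \<rho> (r k) = T ^ k" if "1 \<le> k" "k \<le> N" for k
    using that
  proof (induction k rule: dec_induct)
    case (step m)
    have r1: "0 \<le> r 1" "r 1 \<le> \<rho>" and rm: "0 \<le> r m" "r m \<le> \<rho>"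
      using nonneg[of 1] nonneg[of m] band[of 1] band[of m] step assms(3) by auto
    have "r 1 * r m \<le> \<rho> * \<rho>" using r1 rm by (intro mult_mono) auto
    also have "\<dots> < \<rho>" using assms(1,2) by simp
    finally have "r 1 * r m \<noteq> \<rho>" by simp
    moreover have "r (m + 1) = rate_step \<rho> (r 1) (r m)"
      using assms(4) step unfolding admissible_rates_def by simp
    ultimately show ?case using mobius_inv_step[OF assms(1)] r1 rm step by (simp add: T_def)
  qed (simp add: T_def)
  have "(1 + \<rho>) / (1 + \<rho>\<^sup>2) \<le> T"
    using mobius_inv_band[OF assms(1,2)] band[of 1] assms(3) unfolding T_def by simp
  then have "((1 + \<rho>) / (1 + \<rho>\<^sup>2)) ^ N \<le> T ^ N" using assms(1) by (intro power_mono) auto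
  also have "\<dots> = mobius_inv \<rho> (r N)" using powers[of N] assms(3) by simp
  also have "\<dots> \<le> 2 / (1 + \<rho>)" using mobius_inv_band[OF assms(1,2)] band[of N] assms(3) by simp
  finally show ?thesis .
qed

lemma mobius_ratio_powers_admissible:
  assumes "0 < \<rho>" "\<rho> < 1" "1 \<le> N" "((1 + \<rho>) / (1 + \<rho>\<^sup>2)) ^ N \<le> 2 / (1 + \<rho>)"
  shows "admissible_rates \<rho> N (\<lambda>k. mobius \<rho> (((1 + \<rho>) / (1 + \<rho>\<^sup>2)) ^ k))"
proof -
  define X where "X = (1 + \<rho>) / (1 + \<rho>\<^sup>2)"
  have band: "\<rho>\<^sup>2 \<le> mobius \<rho> (X ^ k) \<and> mobius \<rho> (X ^ k) \<le> \<rho>" if "1 \<le> k" "k \<le> N" for k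
    using mobius_powers_band_iff[OF assms(1-3), of X] assms(4) that unfolding X_def by simp
  have "1 < X" unfolding X_def using band_lower_gt_one[OF assms(1,2)] .
  have below: "\<rho> * X ^ k < 1" if "k \<le> N" for k
  proof -
    have "X ^ k \<le> X ^ N" using that \<open>1 < X\<close> by (intro power_increasing) auto
    then have "X ^ k \<le> 2 / (1 + \<rho>)" using assms(4) unfolding X_def by simp
    then have "\<rho> * X ^ k \<le> \<rho> * (2 / (1 + \<rho>))" using assms(1) by (intro mult_left_mono) auto
    then show ?thesis using band_upper_lt_inverse[OF assms(1,2)] by linarith
  qed
  show ?thesis
    unfolding admissible_rates_def X_def[symmetric]
  proof (intro conjI allI impI)
    fix s assume "1 \<le> s \<and> s \<le> N - 1"
    then have "s + 1 \<le> N" "1 \<le> N" by auto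
    then show "mobius \<rho> (X ^ (s + 1)) = rate_step \<rho> (mobius \<rho> (X ^ 1)) (mobius \<rho> (X ^ s))"
      using below[of 1] below[of s] below[of "s + 1"] assms(1,2)
      by (simp add: mobius_mult mult.commute)
  next
    fix k assume "1 \<le> k \<and> k < N"
    then show "mobius \<rho> (X ^ k) \<le> mobius \<rho> (X ^ (k + 1))"
      using below[of "k + 1"] \<open>1 < X\<close> by (intro mobius_mono assms(1,2) power_increasing) auto
  qed (use band[of 1] band[of N] assms(3) in auto)
qed

lemma ex_admissible_rates_iff:
  assumes "0 < \<rho>" "\<rho> < 1" "1 \<le> N"
  shows "(\<exists>r. admissible_rates \<rho> N r) \<longleftrightarrow> ((1 + \<rho>) / (1 + \<rho>\<^sup>2)) ^ N \<le> 2 / (1 + \<rho>)"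
  using admissible_rates_imp_ratio_power[OF assms] mobius_ratio_powers_admissible[OF assms] by blast

definition log_gap :: "nat \<Rightarrow> real \<Rightarrow> real" where
  "log_gap \<Lambda> x = real \<Lambda> * ln (1 + x) - (real \<Lambda> - 1) * ln (1 + x\<^sup>2)"

lemma threshold_iff_log_gap:
  assumes "1 \<le> \<Lambda>" "0 < y"
  shows "(1 + y) ^ \<Lambda> \<le> 2 * (1 + y\<^sup>2) ^ (\<Lambda> - 1) \<longleftrightarrow> log_gap \<Lambda> y \<le> ln 2"
    and "(1 + y) ^ \<Lambda> = 2 * (1 + y\<^sup>2) ^ (\<Lambda> - 1) \<longleftrightarrow> log_gap \<Lambda> y = ln 2"
proof -
  have sq: "0 < 1 + y\<^sup>2" by (simp add: add_pos_nonneg)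
  then have pos: "0 < (1 + y) ^ \<Lambda>" "0 < 2 * (1 + y\<^sup>2) ^ (\<Lambda> - 1)"
    using assms(2) by simp_all
  have "ln ((1 + y) ^ \<Lambda>) - ln (2 * (1 + y\<^sup>2) ^ (\<Lambda> - 1)) = log_gap \<Lambda> y - ln 2"
    using assms sq by (simp add: log_gap_def ln_mult ln_realpow of_nat_diff)
  then show "(1 + y) ^ \<Lambda> \<le> 2 * (1 + y\<^sup>2) ^ (\<Lambda> - 1) \<longleftrightarrow> log_gap \<Lambda> y \<le> ln 2"
    and "(1 + y) ^ \<Lambda> = 2 * (1 + y\<^sup>2) ^ (\<Lambda> - 1) \<longleftrightarrow> log_gap \<Lambda> y = ln 2"
    using ln_le_cancel_iff[OF pos] ln_inj_iff[OF pos] by linarith+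
qed

lemma log_gap_has_derivative:
  assumes "0 \<le> x"
  shows "(log_gap \<Lambda> has_real_derivative
           (real \<Lambda> - 2 * (real \<Lambda> - 1) * x - (real \<Lambda> - 2) * x\<^sup>2) / ((1 + x) * (1 + x\<^sup>2))) (at x)"
proof -
  have sq: "0 < 1 + x\<^sup>2" by (simp add: add_pos_nonneg)
  have "(log_gap \<Lambda> has_real_derivative real \<Lambda> * (1 / (1 + x)) - (real \<Lambda> - 1) * (2 * x / (1 + x\<^sup>2))) (at x)"
    unfolding log_gap_def[abs_def] using assms sq
    by (auto intro!: derivative_eq_intros simp: power2_eq_square)
  moreover have "real \<Lambda> * (1 / (1 + x)) - (real \<Lambda> - 1) * (2 * x / (1 + x\<^sup>2))
      = (real \<Lambda> - 2 * (real \<Lambda> - 1) * x - (real \<Lambda> - 2) * x\<^sup>2) / ((1 + x) * (1 + x\<^sup>2))"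
    using assms sq by (simp add: field_simps) (simp add: algebra_simps power2_eq_square)
  ultimately show ?thesis by simp
qed

lemma log_gap_continuous_on:
  assumes "S \<subseteq> {0..}"
  shows "continuous_on S (log_gap \<Lambda>)"
  using assms log_gap_has_derivative
  by (intro continuous_at_imp_continuous_on ballI DERIV_isCont) (auto simp: subset_iff)

text \<open>The numerator of the derivative decreases on \<open>[0, \<infinity>)\<close> from \<open>\<Lambda>\<close> at 0 to
  \<open>4 - 2\<Lambda> < 0\<close> at 1, so it changes sign once, in (0,1).\<close>
lemma log_gap_unimodal:
  assumes "3 \<le> \<Lambda>"
  obtains c where "0 < c" "c < 1"
    and "\<And>a b. 0 \<le> a \<Longrightarrow> a < b \<Longrightarrow> b \<le> c \<Longrightarrow> log_gap \<Lambda> a < log_gap \<Lambda> b"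
    and "\<And>a b. c \<le> a \<Longrightarrow> a < b \<Longrightarrow> log_gap \<Lambda> b < log_gap \<Lambda> a"
proof -
  define n where "n = real \<Lambda>"
  have n: "3 \<le> n" using assms unfolding n_def by simp
  define p where "p x = n - 2 * (n - 1) * x - (n - 2) * x\<^sup>2" for x
  have p_decreasing: "p b < p a" if "0 \<le> a" "a < b" for a b
  proof -
    have "p a - p b = (b - a) * (2 * (n - 1) + (n - 2) * (a + b))"
      unfolding p_def by (simp add: algebra_simps power2_eq_square)
    also have "\<dots> > 0" using that n by (intro mult_pos_pos) (auto intro!: add_pos_nonneg)
    finally show ?thesis by simp
  qed
  have "continuous_on {0..1} p" unfolding p_def by (intro continuous_intros)
  moreover have "p 1 \<le> 0" "0 \<le> p 0" using n unfolding p_def by auto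
  ultimately obtain c where c: "0 \<le> c" "c \<le> 1" "p c = 0" using IVT2'[of p 1 0 0] by auto
  have "0 < c" "c < 1" using c n unfolding p_def by (auto simp: order.order_iff_strict)
  have deriv: "DERIV (log_gap \<Lambda>) x :> p x / ((1 + x) * (1 + x\<^sup>2))" if "0 \<le> x" for x
    using log_gap_has_derivative[OF that] unfolding p_def n_def by simp
  have denom: "0 < (1 + x) * (1 + x\<^sup>2)" if "0 \<le> x" for x :: real
    using that by (simp add: add_pos_nonneg zero_less_mult_iff)
  have cont: "continuous_on {a..b} (log_gap \<Lambda>)" if "0 \<le> a" for a b
    using that by (intro log_gap_continuous_on) auto
  show ?thesis
  proof
    show "log_gap \<Lambda> a < log_gap \<Lambda> b" if "0 \<le> a" "a < b" "b \<le> c" for a b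
    proof (rule DERIV_pos_imp_increasing_open[OF that(2) _ cont[OF that(1)]])
      fix x assume "a < x" "x < b"
      then show "\<exists>y. DERIV (log_gap \<Lambda>) x :> y \<and> 0 < y"
        using deriv[of x] denom[of x] p_decreasing[of x c] that c by auto
    qed
    show "log_gap \<Lambda> b < log_gap \<Lambda> a" if "c \<le> a" "a < b" for a b
    proof (rule DERIV_neg_imp_decreasing_open[OF that(2) _ cont])
      fix x assume "a < x" "x < b"
      then show "\<exists>y. DERIV (log_gap \<Lambda>) x :> y \<and> y < 0"
        using deriv[of x] denom[of x] p_decreasing[of c x] that c
        by (auto intro!: divide_neg_pos)
    qed (use \<open>0 < c\<close> that in simp)
  qed fact+
qed

lemma log_gap_crossing:
  assumes "3 \<le> \<Lambda>"
  obtains x0 where "0 < x0" "x0 < 1" "log_gap \<Lambda> x0 = ln 2"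
    and "\<And>y. 0 < y \<Longrightarrow> y < x0 \<Longrightarrow> log_gap \<Lambda> y < ln 2"
    and "\<And>y. x0 < y \<Longrightarrow> y < 1 \<Longrightarrow> ln 2 < log_gap \<Lambda> y"
proof -
  obtain c where c: "0 < c" "c < 1"
    and up: "\<And>a b. 0 \<le> a \<Longrightarrow> a < b \<Longrightarrow> b \<le> c \<Longrightarrow> log_gap \<Lambda> a < log_gap \<Lambda> b"
    and down: "\<And>a b. c \<le> a \<Longrightarrow> a < b \<Longrightarrow> log_gap \<Lambda> b < log_gap \<Lambda> a"
    using log_gap_unimodal[OF assms] by blast
  have at0: "log_gap \<Lambda> 0 = 0" and at1: "log_gap \<Lambda> 1 = ln 2"
    by (simp_all add: log_gap_def algebra_simps)
  have above: "ln 2 < log_gap \<Lambda> y" if "c \<le> y" "y < 1" for y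
    using down[OF that] at1 by simp
  have "continuous_on {0..c} (log_gap \<Lambda>)" by (intro log_gap_continuous_on) auto
  moreover have "log_gap \<Lambda> 0 \<le> ln 2" "ln 2 \<le> log_gap \<Lambda> c"
    using at0 above[of c] c by auto
  ultimately obtain x0 where x0: "0 \<le> x0" "x0 \<le> c" "log_gap \<Lambda> x0 = ln 2"
    using IVT'[of "log_gap \<Lambda>" 0 "ln 2" c] c by auto
  have "x0 \<noteq> 0" "x0 \<noteq> c" using x0 at0 above[of c] c by auto
  show ?thesis
  proof
    show "log_gap \<Lambda> y < ln 2" if "0 < y" "y < x0" for y
      using up[of y x0] that x0 by simp
    show "ln 2 < log_gap \<Lambda> y" if "x0 < y" "y < 1" for y
      using up[of x0 y] above[of y] that x0 by (cases "y \<le> c") auto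
  qed (use x0 \<open>x0 \<noteq> 0\<close> \<open>x0 \<noteq> c\<close> c in auto)
qed

lemma rho_star_threshold:
  assumes "3 \<le> \<Lambda>"
  shows "0 < rho_star \<Lambda>" "rho_star \<Lambda> < 1"
    and "\<And>y. 0 < y \<Longrightarrow> y < 1 \<Longrightarrow>
           (1 + y) ^ \<Lambda> = 2 * (1 + y\<^sup>2) ^ (\<Lambda> - 1) \<longleftrightarrow> y = rho_star \<Lambda>"
    and "\<And>y. 0 < y \<Longrightarrow> y < 1 \<Longrightarrow>
           (1 + y) ^ \<Lambda> \<le> 2 * (1 + y\<^sup>2) ^ (\<Lambda> - 1) \<longleftrightarrow> y \<le> rho_star \<Lambda>"
proof -
  obtain x0 where x0: "0 < x0" "x0 < 1" "log_gap \<Lambda> x0 = ln 2"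
    and below: "\<And>y. 0 < y \<Longrightarrow> y < x0 \<Longrightarrow> log_gap \<Lambda> y < ln 2"
    and above: "\<And>y. x0 < y \<Longrightarrow> y < 1 \<Longrightarrow> ln 2 < log_gap \<Lambda> y"
    using log_gap_crossing[OF assms] by blast
  have "1 \<le> \<Lambda>" using assms by simp
  note iff = threshold_iff_log_gap[OF this]
  have eq: "(1 + y) ^ \<Lambda> = 2 * (1 + y\<^sup>2) ^ (\<Lambda> - 1) \<longleftrightarrow> y = x0" if "0 < y" "y < 1" for y
    using iff(2)[OF that(1)] below[OF that(1)] above[OF _ that(2)] x0(3)
    by (cases y x0 rule: linorder_cases) auto
  have "rho_star \<Lambda> = x0"
    unfolding rho_star_def using assms x0 eq by (auto intro: the_equality)
  then show "0 < rho_star \<Lambda>" "rho_star \<Lambda> < 1"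
    and "\<And>y. 0 < y \<Longrightarrow> y < 1 \<Longrightarrow> (1 + y) ^ \<Lambda> = 2 * (1 + y\<^sup>2) ^ (\<Lambda> - 1) \<longleftrightarrow> y = rho_star \<Lambda>"
    using x0 eq by auto
  show "(1 + y) ^ \<Lambda> \<le> 2 * (1 + y\<^sup>2) ^ (\<Lambda> - 1) \<longleftrightarrow> y \<le> rho_star \<Lambda>" if "0 < y" "y < 1" for y
    using iff(1)[OF that(1)] below[OF that(1)] above[OF _ that(2)] x0(3) \<open>rho_star \<Lambda> = x0\<close>
    by (cases y x0 rule: linorder_cases) auto
qed

lemma threshold_iff_le_rho_star:
  assumes "2 \<le> \<Lambda>" "0 < \<rho>" "\<rho> < 1"
  shows "(1 + \<rho>) ^ \<Lambda> \<le> 2 * (1 + \<rho>\<^sup>2) ^ (\<Lambda> - 1) \<longleftrightarrow> \<rho> \<le> rho_star \<Lambda>"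
proof (cases "\<Lambda> = 2")
  case True
  have "2 * (1 + \<rho>\<^sup>2) - (1 + \<rho>)\<^sup>2 = (1 - \<rho>)\<^sup>2" by (simp add: algebra_simps power2_eq_square)
  then have "(1 + \<rho>)\<^sup>2 \<le> 2 * (1 + \<rho>\<^sup>2)" using zero_le_power2[of "1 - \<rho>"] by linarith
  then show ?thesis using True assms(3) by (simp add: rho_star_def)
next
  case False
  then show ?thesis using rho_star_threshold(4)[of \<Lambda> \<rho>] assms by simp
qed

lemma threshold_root_unique:
  assumes "3 \<le> \<Lambda>"
  shows "\<exists>!x::real. 0 < x \<and> x < 1 \<and> (1 + x) ^ \<Lambda> = 2 * (1 + x\<^sup>2) ^ (\<Lambda> - 1)"
  using rho_star_threshold[OF assms] by blast

theorem lemma5p6: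
  fixes \<rho> :: real and \<Lambda> :: nat
  assumes "0 < \<rho>" and "\<rho> < 1" and "\<Lambda> \<ge> 2"
  shows "(\<Lambda> \<ge> 3 \<longrightarrow>
            (\<exists>!(x::real). 0 < x \<and> x < 1 \<and> (1 + x) ^ \<Lambda> = 2 * (1 + x\<^sup>2) ^ (\<Lambda> - 1)))
    \<and> ((\<exists>r :: nat \<Rightarrow> real.
            (\<forall>s. 1 \<le> s \<and> s \<le> \<Lambda> - 2 \<longrightarrow>
               r (s + 1) = ((1 + (inverse \<rho> + 1) * r 1) * r s + r 1) / (1 - inverse \<rho> * r 1 * r s))
          \<and> \<rho>\<^sup>2 \<le> r 1
          \<and> (\<forall>k. 1 \<le> k \<and> k < \<Lambda> - 1 \<longrightarrow> r k \<le> r (k + 1))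
          \<and> r (\<Lambda> - 1) \<le> \<rho>)
       \<longleftrightarrow>
         (let X = (1 + \<rho>) / (1 + \<rho>\<^sup>2) in
          \<forall>k. 1 \<le> k \<and> k \<le> \<Lambda> - 1 \<longrightarrow>
             \<rho>\<^sup>2 \<le> \<rho> * (X ^ k - 1) / (1 - \<rho> * X ^ k) \<and> \<rho> * (X ^ k - 1) / (1 - \<rho> * X ^ k) \<le> \<rho>))
    \<and> ((let X = (1 + \<rho>) / (1 + \<rho>\<^sup>2) in
          \<forall>k. 1 \<le> k \<and> k \<le> \<Lambda> - 1 \<longrightarrow>
             \<rho>\<^sup>2 \<le> \<rho> * (X ^ k - 1) / (1 - \<rho> * X ^ k) \<and> \<rho> * (X ^ k - 1) / (1 - \<rho> * X ^ k) \<le> \<rho>)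
       \<longleftrightarrow>
         (let X = (2 / (1 + \<rho>)) powr (1 / real (\<Lambda> - 1)) in
          \<forall>k. 1 \<le> k \<and> k \<le> \<Lambda> - 1 \<longrightarrow>
             \<rho>\<^sup>2 \<le> \<rho> * (X ^ k - 1) / (1 - \<rho> * X ^ k) \<and> \<rho> * (X ^ k - 1) / (1 - \<rho> * X ^ k) \<le> \<rho>))
    \<and> ((let X = (2 / (1 + \<rho>)) powr (1 / real (\<Lambda> - 1)) in
          \<forall>k. 1 \<le> k \<and> k \<le> \<Lambda> - 1 \<longrightarrow>
             \<rho>\<^sup>2 \<le> \<rho> * (X ^ k - 1) / (1 - \<rho> * X ^ k) \<and> \<rho> * (X ^ k - 1) / (1 - \<rho> * X ^ k) \<le> \<rho>)
       \<longleftrightarrow> (1 + \<rho>) ^ \<Lambda> \<le> 2 * (1 + \<rho>\<^sup>2) ^ (\<Lambda> - 1))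
    \<and> ((1 + \<rho>) ^ \<Lambda> \<le> 2 * (1 + \<rho>\<^sup>2) ^ (\<Lambda> - 1) \<longleftrightarrow> \<rho> \<le> rho_star \<Lambda>)"
proof -
  obtain N where \<Lambda>: "\<Lambda> = Suc N" and N: "1 \<le> N" using assms(3) by (cases \<Lambda>) auto
  define Xb Xc where "Xb = (1 + \<rho>) / (1 + \<rho>\<^sup>2)" and "Xc = (2 / (1 + \<rho>)) powr (1 / real N)"
  have Xc_power: "Xc ^ N = 2 / (1 + \<rho>)"
    unfolding Xc_def using N assms(1) by (simp flip: root_powr_inverse)
  have "0 \<le> Xb" using assms(1) unfolding Xb_def by simp
  then have c_iff_b: "Xb \<le> Xc \<longleftrightarrow> Xb ^ N \<le> 2 / (1 + \<rho>)"
    using power_mono_iff[of Xb Xc N] N Xc_power unfolding Xc_def by simp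
  show ?thesis
    using ex_admissible_rates_iff[OF assms(1,2) N] mobius_powers_band_iff[OF assms(1,2) N]
      ratio_power_threshold_iff[of \<rho> N] threshold_iff_le_rho_star[OF assms(3,1,2)]
      threshold_root_unique[of \<Lambda>] c_iff_b Xc_power assms(1)
    unfolding \<Lambda> admissible_rates_def rate_step_def mobius_def Let_def Xb_def Xc_def
    by simp
qed

end
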